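(* Let $(\mathcal N,\mathcal E)$ be a fixed connected undirected graph on $\mathcal N=\{1,\dots,n\}$ and $W$ a symmetric stochastic matrix with $w_{ij}=0$ for $i\ne j$, $(i,j)\notin\mathcal E$, $w_{ii}>1/2$ for all $i$, and $w_{ij}$ rational in $(0,1)$ for $(i,j)\in\mathcal E$. For each $i$ let $x_i(1),x_i(2),\dots$ be i.i.d. samples of $X_i$ with $|X_i|\le K$, $\bar x_i=E[X_i]$, $z_i(t)=\frac1t\sum_{\tau\le t}x_i(\tau)$. Fix $\Delta>0$, let $\mathcal B=\{k\Delta+\Delta/2:k=0,1,\dots\}$, let $\mathcal R(x)$ be the multiple $k\Delta$ ($k=0,1,\dots$) nearest to $x$ with $\mathcal R(k\Delta+\Delta/2)=(k+1)\Delta$, $\tilde z_i(t)=\mathcal R(z_i(t))$, $\Delta\tilde z(t+1)=\tilde z(t+1)-\tilde z(t)$. Let $\mathcal Q$ be the element-wise truncation, ceiling, or rounding-to-integer quantizer and let $$y(t+1)=W\mathcal Q(y(t))+y(t)-\mathcal Q(y(t))+\Delta\tilde z(t+1),\qquad t=1,2,\dots.$$ If $\bar x_i\notin\mathcal B$ for all $i$, then almost surely there is a finite set containing $y_i(t)$ for all $t\in\{1,2,\dots\}$ and all $i\in\mathcal N$. *)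

theory Defs
  imports "HOL-Probability.Probability"
begin

datatype quantizer = Truncation | Ceiling | Rounding

fun quant :: "quantizer \<Rightarrow> real \<Rightarrow> real" where
  "quant Truncation x = of_int \<lfloor>x\<rfloor>"
| "quant Ceiling x = of_int \<lceil>x\<rceil>"
| "quant Rounding x = of_int \<lfloor>x + 1/2\<rfloor>"

definition roundDelta :: "real \<Rightarrow> real \<Rightarrow> real" where
  "roundDelta \<Delta> x = \<Delta> * of_int (max 0 \<lfloor>x / \<Delta> + 1/2\<rfloor>)"

definition boundary_set :: "real \<Rightarrow> real set" where
  "boundary_set \<Delta> = {real k * \<Delta> + \<Delta> / 2 | k. True}"

definition connected_graph :: "nat \<Rightarrow> (nat \<times> nat) set \<Rightarrow> bool" where
  "connected_graph n E \<longleftrightarrow> n \<ge> 1 \<and> E \<subseteq> {0..<n} \<times> {0..<n} \<and> sym E \<and> irrefl E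
     \<and> (\<forall>i<n. \<forall>j<n. (i, j) \<in> E\<^sup>*)"

definition sample_mean :: "(nat \<Rightarrow> 'a \<Rightarrow> real) \<Rightarrow> nat \<Rightarrow> 'a \<Rightarrow> real" where
  "sample_mean xi t \<omega> = (\<Sum>\<tau>\<in>{1..t}. xi \<tau> \<omega>) / real t"

end

theory Submission
  imports Defs
begin

text \<open>Almost surely every sample mean \<open>z\<^sub>i(t)\<close> converges to the mean of \<open>X\<^sub>i\<close>
  (Hoeffding's inequality gives geometrically decaying deviation probabilities, so
  Borel--Cantelli applies), and since the mean is not a tie point of \<open>R\<close>, the rounded means
  are eventually constant. From then on the perturbation vanishes and
  \<open>y(t+1) = W Q(y(t)) + y(t) - Q(y(t))\<close>. For this recursion the integers \<open>Q(y\<^sub>i(t))\<close> stay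
  between their extreme values at the switching time \<open>T\<close>: the new value is a convex combination
  of old quantized values plus the residual \<open>y - Q(y)\<close>, and adding such a residual to an
  integer does not change its quantization. Hence \<open>y\<close> is bounded. Moreover, for a common
  denominator \<open>D\<close> of the rational weights, \<open>D (y\<^sub>i(t) - y\<^sub>i(T))\<close> is an integer, and a
  bounded subset of a shifted lattice is finite.\<close>

fun int_quant :: "quantizer \<Rightarrow> real \<Rightarrow> int" where
  "int_quant Truncation x = \<lfloor>x\<rfloor>"
| "int_quant Ceiling x = \<lceil>x\<rceil>"
| "int_quant Rounding x = \<lfloor>x + 1/2\<rfloor>"

lemma quant_eq_of_int_quant: "quant q x = of_int (int_quant q x)"
  by (cases q) auto

lemma int_quant_mono: "x \<le> y \<Longrightarrow> int_quant q x \<le> int_quant q y"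
  by (cases q) (auto intro: floor_mono ceiling_mono)

lemma abs_quant_residual_le: "\<bar>x - quant q x\<bar> \<le> 1"
  using floor_correct[of x] ceiling_correct[of x] floor_correct[of "x + 1/2"]
  by (cases q; simp add: abs_le_iff; linarith)

lemma int_quant_of_int_add_residual: "int_quant q (of_int k + (x - quant q x)) = k"
proof (cases q)
  case Ceiling
  have "\<lceil>of_int k + (x - of_int \<lceil>x\<rceil>)\<rceil> = k"
    by (rule ceiling_unique) (use ceiling_correct[of x] in auto)
  then show ?thesis using Ceiling by simp
next
  case Rounding
  have "of_int k + (x - of_int \<lfloor>x + 1/2\<rfloor>) + 1/2 = (x + 1/2) - of_int \<lfloor>x + 1/2\<rfloor> + of_int k"
    by simp
  then have "\<lfloor>of_int k + (x - of_int \<lfloor>x + 1/2\<rfloor>) + 1/2\<rfloor> = k"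
    by (simp only: floor_add_int floor_diff_of_int) simp
  then show ?thesis using Rounding by simp
qed simp

lemma Rats_common_denominator:
  assumes "finite I" "\<And>i. i \<in> I \<Longrightarrow> r i \<in> \<rat>"
  shows "\<exists>D::int. D > 0 \<and> (\<forall>i\<in>I. of_int D * r i \<in> \<int>)"
proof -
  have "\<exists>d::int. d > 0 \<and> of_int d * r i \<in> \<int>" if i: "i \<in> I" for i
  proof -
    obtain a d :: int where "d > 0" "r i = of_int a / of_int d"
      using assms(2)[OF i] by (rule Rats_cases')
    then show ?thesis by (intro exI[of _ d]) auto
  qed
  then obtain d where d: "\<And>i. i \<in> I \<Longrightarrow> d i > 0 \<and> of_int (d i) * r i \<in> \<int>"
    by metis
  show ?thesis
  proof (intro exI[of _ "\<Prod>i\<in>I. d i"] conjI ballI)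
    show "(\<Prod>i\<in>I. d i) > 0" using d by (intro prod_pos) auto
    fix i assume i: "i \<in> I"
    have "of_int (\<Prod>j\<in>I. d j) * r i = of_int (\<Prod>j\<in>I - {i}. d j) * (of_int (d i) * r i)"
      using \<open>finite I\<close> i by (simp add: prod.remove)
    also have "\<dots> \<in> \<int>" by (rule Ints_mult[OF Ints_of_int]) (use d[OF i] in blast)
    finally show "of_int (\<Prod>j\<in>I. d j) * r i \<in> \<int>" .
  qed
qed

lemma finite_bounded_lattice_coset:
  fixes D :: int and a B :: real
  assumes "D > 0"
  shows "finite {z. \<bar>z\<bar> \<le> B \<and> of_int D * (z - a) \<in> \<int>}"
proof (rule finite_subset)
  define N where "N = \<lceil>of_int D * (B + \<bar>a\<bar>)\<rceil>"
  show "finite ((\<lambda>k. a + of_int k / of_int D) ` {-N..N})" by simp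
  show "{z. \<bar>z\<bar> \<le> B \<and> of_int D * (z - a) \<in> \<int>} \<subseteq> (\<lambda>k. a + of_int k / of_int D) ` {-N..N}"
  proof safe
    fix z assume "\<bar>z\<bar> \<le> B" "of_int D * (z - a) \<in> \<int>"
    then obtain k where k: "of_int D * (z - a) = of_int k" by (auto elim: Ints_cases)
    have "\<bar>z - a\<bar> \<le> B + \<bar>a\<bar>" using \<open>\<bar>z\<bar> \<le> B\<close> by linarith
    then have "\<bar>of_int k\<bar> \<le> of_int D * (B + \<bar>a\<bar>)"
      unfolding k[symmetric] abs_mult using \<open>D > 0\<close> by (simp add: mult_left_mono)
    then have "k \<in> {-N..N}" unfolding N_def by (auto simp: abs_le_iff) linarith+
    moreover have "z = a + of_int k / of_int D" using k \<open>D > 0\<close> by (simp add: field_simps)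
    ultimately show "z \<in> (\<lambda>k. a + of_int k / of_int D) ` {-N..N}" by blast
  qed
qed

lemma stochastic_row_combination_bounds:
  fixes W :: "nat \<Rightarrow> nat \<Rightarrow> real"
  assumes "\<And>j. j < n \<Longrightarrow> W i j \<ge> 0" "(\<Sum>j<n. W i j) = 1"
    and "\<And>j. j < n \<Longrightarrow> m \<le> v j \<and> v j \<le> M"
  shows "m \<le> (\<Sum>j<n. W i j * v j) \<and> (\<Sum>j<n. W i j * v j) \<le> M"
proof
  have "m = (\<Sum>j<n. W i j * m)" using assms(2) by (simp add: sum_distrib_right[symmetric])
  also have "\<dots> \<le> (\<Sum>j<n. W i j * v j)" using assms by (intro sum_mono mult_left_mono) auto
  finally show "m \<le> (\<Sum>j<n. W i j * v j)" .
  have "(\<Sum>j<n. W i j * v j) \<le> (\<Sum>j<n. W i j * M)" using assms by (intro sum_mono mult_left_mono) auto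
  also have "\<dots> = M" using assms(2) by (simp add: sum_distrib_right[symmetric])
  finally show "(\<Sum>j<n. W i j * v j) \<le> M" .
qed

lemma stochastic_matrix_Rats:
  fixes W :: "nat \<Rightarrow> nat \<Rightarrow> real"
  assumes "\<And>i. i < n \<Longrightarrow> (\<Sum>j<n. W i j) = 1"
    and off_diag: "\<And>i j. i < n \<Longrightarrow> j < n \<Longrightarrow> i \<noteq> j \<Longrightarrow> W i j \<in> \<rat>"
    and "i < n" "j < n"
  shows "W i j \<in> \<rat>"
proof (cases "i = j")
  case True
  have "(\<Sum>k<n. W i k) = W i i + (\<Sum>k\<in>{..<n} - {i}. W i k)"
    using \<open>i < n\<close> by (intro sum.remove) auto
  then have "W i i = 1 - (\<Sum>k\<in>{..<n} - {i}. W i k)"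
    using assms(1)[OF \<open>i < n\<close>] by linarith
  also have "\<dots> \<in> \<rat>" using off_diag \<open>i < n\<close> by (intro Rats_diff Rats_sum) auto
  finally show ?thesis using True by simp
qed (use off_diag assms(3,4) in auto)

locale quantized_consensus =
  fixes n :: nat and W :: "nat \<Rightarrow> nat \<Rightarrow> real" and q :: quantizer
    and Y :: "nat \<Rightarrow> nat \<Rightarrow> real" and T :: nat
  assumes W_nonneg: "\<And>i j. i < n \<Longrightarrow> j < n \<Longrightarrow> W i j \<ge> 0"
    and W_stoch: "\<And>i. i < n \<Longrightarrow> (\<Sum>j<n. W i j) = 1"
    and W_rat: "\<And>i j. i < n \<Longrightarrow> j < n \<Longrightarrow> W i j \<in> \<rat>"
    and Y_rec: "\<And>t i. t \<ge> T \<Longrightarrow> i < n \<Longrightarrow>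
       Y (t + 1) i = (\<Sum>j<n. W i j * quant q (Y t j)) + Y t i - quant q (Y t i)"
begin

lemma int_quant_bounds_invariant:
  assumes "\<And>j. j < n \<Longrightarrow> m \<le> int_quant q (Y T j) \<and> int_quant q (Y T j) \<le> M"
    and "t \<ge> T" "j < n"
  shows "m \<le> int_quant q (Y t j) \<and> int_quant q (Y t j) \<le> M"
  using \<open>t \<ge> T\<close> \<open>j < n\<close>
proof (induction t arbitrary: j rule: dec_induct)
  case base
  then show ?case using assms(1) by blast
next
  case (step t)
  define c where "c = (\<Sum>k<n. W j k * quant q (Y t k))"
  have c: "of_int m \<le> c \<and> c \<le> of_int M"
    unfolding c_def quant_eq_of_int_quant
    by (rule stochastic_row_combination_bounds) (use W_nonneg W_stoch step in auto)
  have Y: "Y (t + 1) j = c + (Y t j - quant q (Y t j))"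
    using Y_rec[of t j] step by (simp add: c_def)
  have "int_quant q (of_int m + (Y t j - quant q (Y t j))) \<le> int_quant q (Y (t + 1) j)"
    "int_quant q (Y (t + 1) j) \<le> int_quant q (of_int M + (Y t j - quant q (Y t j)))"
    unfolding Y using c by (auto intro: int_quant_mono)
  then show ?case unfolding int_quant_of_int_add_residual by simp
qed

lemma lattice_invariant:
  assumes D: "\<And>i j. i < n \<Longrightarrow> j < n \<Longrightarrow> of_int D * W i j \<in> \<int>"
    and "t \<ge> T" "i < n"
  shows "of_int D * (Y t i - Y T i) \<in> \<int>"
  using \<open>t \<ge> T\<close>
proof (induction t rule: dec_induct)
  case (step t)
  have "of_int D * (Y (t + 1) i - Y T i) = (\<Sum>j<n. (of_int D * W i j) * quant q (Y t j))
      - of_int D * quant q (Y t i) + of_int D * (Y t i - Y T i)"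
    using Y_rec[of t i] step \<open>i < n\<close>
    by (simp add: sum_distrib_left mult.assoc right_diff_distrib distrib_left)
  also have "\<dots> \<in> \<int>"
    unfolding quant_eq_of_int_quant using \<open>i < n\<close>
    by (intro Ints_add Ints_diff Ints_sum Ints_mult[OF D] Ints_mult[OF Ints_of_int Ints_of_int]
        Ints_of_int step.IH) auto
  finally show ?case by simp
qed simp

lemma bounded_after_T: "\<exists>B. \<forall>t\<ge>T. \<forall>j<n. \<bar>Y t j\<bar> \<le> B"
proof -
  define C where "C = Max (insert 0 ((\<lambda>j. \<bar>int_quant q (Y T j)\<bar>) ` {..<n}))"
  have C_init: "-C \<le> int_quant q (Y T j) \<and> int_quant q (Y T j) \<le> C" if "j < n" for j
  proof -
    have "\<bar>int_quant q (Y T j)\<bar> \<le> C"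
      unfolding C_def by (rule Max_ge) (use that in auto)
    then show ?thesis by linarith
  qed
  have "\<bar>Y t j\<bar> \<le> of_int C + 1" if "t \<ge> T" "j < n" for t j
  proof -
    have "-C \<le> int_quant q (Y t j) \<and> int_quant q (Y t j) \<le> C"
      by (rule int_quant_bounds_invariant[OF C_init that])
    then have "\<bar>quant q (Y t j)\<bar> \<le> of_int C"
      unfolding quant_eq_of_int_quant by linarith
    then show ?thesis using abs_quant_residual_le[of "Y t j" q] by linarith
  qed
  then show ?thesis by blast
qed

lemma W_common_denominator: "\<exists>D::int. D > 0 \<and> (\<forall>i<n. \<forall>j<n. of_int D * W i j \<in> \<int>)"
proof -
  have "\<exists>D::int. D > 0 \<and> (\<forall>p\<in>{..<n} \<times> {..<n}. of_int D * W (fst p) (snd p) \<in> \<int>)"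
    by (rule Rats_common_denominator) (auto intro: W_rat)
  then show ?thesis by force
qed

lemma finite_values: "\<exists>S. finite S \<and> (\<forall>t. \<forall>i<n. Y t i \<in> S)"
proof -
  obtain B where B: "\<And>t i. t \<ge> T \<Longrightarrow> i < n \<Longrightarrow> \<bar>Y t i\<bar> \<le> B"
    using bounded_after_T by blast
  obtain D :: int where "D > 0" and D: "\<And>i j. i < n \<Longrightarrow> j < n \<Longrightarrow> of_int D * W i j \<in> \<int>"
    using W_common_denominator by blast
  define S where "S = (\<lambda>(t, i). Y t i) ` ({..T} \<times> {..<n}) \<union>
      (\<Union>i<n. {z. \<bar>z\<bar> \<le> B \<and> of_int D * (z - Y T i) \<in> \<int>})"
  have "Y t i \<in> S" if "i < n" for t i
  proof (cases "t \<le> T")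
    case True
    then show ?thesis unfolding S_def using \<open>i < n\<close> by force
  next
    case False
    then have "Y t i \<in> {z. \<bar>z\<bar> \<le> B \<and> of_int D * (z - Y T i) \<in> \<int>}"
      using \<open>i < n\<close> B lattice_invariant[OF D] by simp
    then show ?thesis unfolding S_def using \<open>i < n\<close> by blast
  qed
  moreover have "finite S" unfolding S_def using finite_bounded_lattice_coset[OF \<open>D > 0\<close>] by auto
  ultimately show ?thesis by blast
qed

end

lemma roundDelta_eventually_eq:
  assumes "\<Delta> > 0" "\<mu> \<notin> boundary_set \<Delta>"
  shows "\<forall>\<^sub>F z in nhds \<mu>. roundDelta \<Delta> z = roundDelta \<Delta> \<mu>"
proof (cases "\<mu> < \<Delta> / 2")
  case True
  have "roundDelta \<Delta> z = 0" if "z < \<Delta> / 2" for z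
  proof -
    have "z / \<Delta> < 1/2" using that \<open>\<Delta> > 0\<close> by (simp add: field_simps)
    then have "\<lfloor>z / \<Delta> + 1/2\<rfloor> \<le> 0" by linarith
    then show ?thesis unfolding roundDelta_def by simp
  qed
  moreover have "\<forall>\<^sub>F z in nhds \<mu>. z < \<Delta> / 2"
    using True by (rule order_tendstoD(2)[OF filterlim_ident])
  ultimately show ?thesis using True by (auto elim: eventually_mono)
next
  case False
  define u where "u = \<mu> / \<Delta> + 1/2"
  have "u \<notin> \<int>"
  proof
    assume "u \<in> \<int>"
    then obtain k where k: "u = of_int k" by (auto elim: Ints_cases)
    moreover have "u \<ge> 1" using False \<open>\<Delta> > 0\<close> unfolding u_def by (simp add: field_simps)
    ultimately have "\<mu> = real (nat (k - 1)) * \<Delta> + \<Delta> / 2"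
      using \<open>\<Delta> > 0\<close> unfolding u_def by (simp add: field_simps)
    then show False using assms(2) unfolding boundary_set_def by auto
  qed
  have "((\<lambda>z. z / \<Delta> + 1/2) \<longlongrightarrow> u) (nhds \<mu>)"
    unfolding u_def using \<open>\<Delta> > 0\<close> by (intro tendsto_intros filterlim_ident) auto
  from eventually_floor_eq[OF this \<open>u \<notin> \<int>\<close>]
  show ?thesis by eventually_elim (use \<open>\<Delta> > 0\<close> in \<open>simp add: roundDelta_def u_def\<close>)
qed

lemma sample_mean_measurable [measurable]:
  assumes "\<And>t. t \<ge> 1 \<Longrightarrow> X t \<in> borel_measurable M"
  shows "sample_mean X t \<in> borel_measurable M"
  unfolding sample_mean_def[abs_def]
  by (intro borel_measurable_divide borel_measurable_sum) (auto intro: assms)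

context prob_space
begin

lemma prob_sample_mean_deviation_le:
  fixes X :: "nat \<Rightarrow> 'a \<Rightarrow> real"
  assumes meas: "\<And>t. t \<ge> 1 \<Longrightarrow> X t \<in> borel_measurable M"
    and indep: "indep_vars (\<lambda>_. borel) X {1..}"
    and ident: "\<And>t. t \<ge> 1 \<Longrightarrow> distr M borel (X t) = distr M borel (X 1)"
    and bounded: "AE \<omega> in M. \<bar>X 1 \<omega>\<bar> \<le> K"
    and "\<epsilon> \<ge> 0"
  shows "prob {\<omega> \<in> space M. \<epsilon> \<le> \<bar>sample_mean X (Suc m) \<omega> - expectation (X 1)\<bar>}
    \<le> 2 * exp (- (\<epsilon>\<^sup>2 / (2 * (\<bar>K\<bar> + 1)\<^sup>2))) ^ Suc m"
proof -
  define b where "b = \<bar>K\<bar> + 1"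
  have "b > 0" unfolding b_def by simp
  interpret Hoeffding_ineq_iid M "{1..Suc m}" X "X 1" "-b" b "expectation (X 1)"
  proof unfold_locales
    show "finite {1..Suc m}" by simp
    show "indep_vars (\<lambda>_. borel) X {1..Suc m}" by (rule indep_vars_subset[OF indep]) auto
    show "distr M borel (X t) = distr M borel (X 1)" if "t \<in> {1..Suc m}" for t
      using that by (intro ident) simp
    show "random_variable borel (X 1)" by (rule meas) simp
    show "AE \<omega> in M. X 1 \<omega> \<in> {-b..b}"
      using bounded by eventually_elim (auto simp: b_def abs_le_iff)
  qed simp
  have "{\<omega> \<in> space M. \<epsilon> \<le> \<bar>sample_mean X (Suc m) \<omega> - expectation (X 1)\<bar>} = {\<omega> \<in> space M.
      \<bar>(\<Sum>i\<in>{1..Suc m}. X i \<omega>) / real (card {1..Suc m}) - expectation (X 1)\<bar> \<ge> \<epsilon>}"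
    unfolding sample_mean_def by (simp only: card_atLeastAtMost diff_Suc_1)
  also have "prob \<dots> \<le> 2 * exp (-2 * real (card {1..Suc m}) * \<epsilon>\<^sup>2 / (b - - b)\<^sup>2)"
    using \<open>\<epsilon> \<ge> 0\<close> \<open>b > 0\<close> by (intro Hoeffding_ineq_abs_ge') auto
  also have "-2 * real (card {1..Suc m}) * \<epsilon>\<^sup>2 / (b - - b)\<^sup>2 = real (Suc m) * - (\<epsilon>\<^sup>2 / (2 * b\<^sup>2))"
    using \<open>b > 0\<close> by (simp add: field_simps power2_eq_square)
  also have "exp (real (Suc m) * - (\<epsilon>\<^sup>2 / (2 * b\<^sup>2))) = exp (- (\<epsilon>\<^sup>2 / (2 * b\<^sup>2))) ^ Suc m"
    by (rule exp_of_nat_mult)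
  finally show ?thesis unfolding b_def .
qed

lemma AE_eventually_sample_mean_close:
  fixes X :: "nat \<Rightarrow> 'a \<Rightarrow> real"
  assumes meas: "\<And>t. t \<ge> 1 \<Longrightarrow> X t \<in> borel_measurable M"
    and indep: "indep_vars (\<lambda>_. borel) X {1..}"
    and ident: "\<And>t. t \<ge> 1 \<Longrightarrow> distr M borel (X t) = distr M borel (X 1)"
    and bounded: "AE \<omega> in M. \<bar>X 1 \<omega>\<bar> \<le> K"
    and "\<epsilon> > 0"
  shows "AE \<omega> in M. \<forall>\<^sub>F t in sequentially. \<bar>sample_mean X t \<omega> - expectation (X 1)\<bar> < \<epsilon>"
proof -
  define c where "c = \<epsilon>\<^sup>2 / (2 * (\<bar>K\<bar> + 1)\<^sup>2)"
  have "c > 0" using \<open>\<epsilon> > 0\<close> unfolding c_def by (simp add: add_pos_nonneg)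
  define A where "A m = {\<omega> \<in> space M. \<epsilon> \<le> \<bar>sample_mean X (Suc m) \<omega> - expectation (X 1)\<bar>}" for m
  have A_sets: "A m \<in> sets M" for m
    unfolding A_def using meas by measurable
  have A_bound: "prob (A m) \<le> 2 * exp (- c) * exp (- c) ^ m" for m
    using prob_sample_mean_deviation_le[OF meas indep ident bounded, of \<epsilon> m] \<open>\<epsilon> > 0\<close>
    unfolding A_def c_def by simp
  have "summable (\<lambda>m. 2 * exp (- c) * exp (- c) ^ m)"
    using \<open>c > 0\<close> by (intro summable_mult summable_geometric) simp
  then have "summable (\<lambda>m. measure M (A m))"
    by (rule summable_comparison_test'[where N = 0]) (use A_bound in simp)
  then have "AE \<omega> in M. \<forall>\<^sub>F m in sequentially. \<omega> \<in> space M - A m"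
    by (intro borel_cantelli_AE1 A_sets) (simp_all add: less_top[symmetric])
  then show ?thesis
  proof eventually_elim
    case (elim \<omega>)
    then have "\<forall>\<^sub>F m in sequentially. \<bar>sample_mean X (Suc m) \<omega> - expectation (X 1)\<bar> < \<epsilon>"
      by (rule eventually_mono) (auto simp: A_def)
    then show ?case by (rule iffD1[OF eventually_sequentially_Suc])
  qed
qed

lemma AE_sample_mean_tendsto:
  fixes X :: "nat \<Rightarrow> 'a \<Rightarrow> real"
  assumes "\<And>t. t \<ge> 1 \<Longrightarrow> X t \<in> borel_measurable M"
    and "indep_vars (\<lambda>_. borel) X {1..}"
    and "\<And>t. t \<ge> 1 \<Longrightarrow> distr M borel (X t) = distr M borel (X 1)"
    and "AE \<omega> in M. \<bar>X 1 \<omega>\<bar> \<le> K"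
  shows "AE \<omega> in M. (\<lambda>t. sample_mean X t \<omega>) \<longlonglongrightarrow> expectation (X 1)"
proof -
  have "AE \<omega> in M. \<forall>k. \<forall>\<^sub>F t in sequentially.
      \<bar>sample_mean X t \<omega> - expectation (X 1)\<bar> < inverse (real (Suc k))"
    unfolding AE_all_countable by (intro allI AE_eventually_sample_mean_close[OF assms]) auto
  then show ?thesis
  proof eventually_elim
    case (elim \<omega>)
    show ?case
    proof (rule tendstoI)
      fix e :: real assume "e > 0"
      then obtain k where k: "inverse (real (Suc k)) < e" using reals_Archimedean by blast
      show "\<forall>\<^sub>F t in sequentially. dist (sample_mean X t \<omega>) (expectation (X 1)) < e"
        using elim[rule_format, of k] by eventually_elim (use k in \<open>simp add: dist_real_def\<close>)
    qed
  qed
qed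

lemma AE_eventually_roundDelta_sample_mean:
  fixes X :: "nat \<Rightarrow> 'a \<Rightarrow> real"
  assumes "\<And>t. t \<ge> 1 \<Longrightarrow> X t \<in> borel_measurable M"
    and "indep_vars (\<lambda>_. borel) X {1..}"
    and "\<And>t. t \<ge> 1 \<Longrightarrow> distr M borel (X t) = distr M borel (X 1)"
    and "AE \<omega> in M. \<bar>X 1 \<omega>\<bar> \<le> K"
    and "\<Delta> > 0" "expectation (X 1) \<notin> boundary_set \<Delta>"
  shows "AE \<omega> in M. \<forall>\<^sub>F t in sequentially.
    roundDelta \<Delta> (sample_mean X t \<omega>) = roundDelta \<Delta> (expectation (X 1))"
proof -
  have "AE \<omega> in M. (\<lambda>t. sample_mean X t \<omega>) \<longlonglongrightarrow> expectation (X 1)"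
    using assms(1-4) by (rule AE_sample_mean_tendsto)
  then show ?thesis
    by eventually_elim (rule eventually_compose_filterlim[OF roundDelta_eventually_eq[OF assms(5,6)]])
qed

end

theorem lemma3:
  fixes n :: nat and E :: "(nat \<times> nat) set" and W :: "nat \<Rightarrow> nat \<Rightarrow> real"
    and M :: "'a measure" and x :: "nat \<Rightarrow> nat \<Rightarrow> 'a \<Rightarrow> real"
    and K \<Delta> :: real and q :: quantizer and y :: "'a \<Rightarrow> nat \<Rightarrow> nat \<Rightarrow> real"
  assumes graph: "connected_graph n E"
    and W_nonneg: "\<And>i j. i < n \<Longrightarrow> j < n \<Longrightarrow> W i j \<ge> 0"
    and W_sym: "\<And>i j. i < n \<Longrightarrow> j < n \<Longrightarrow> W i j = W j i"
    and W_stoch: "\<And>i. i < n \<Longrightarrow> (\<Sum>j<n. W i j) = 1"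
    and W_zero: "\<And>i j. i < n \<Longrightarrow> j < n \<Longrightarrow> i \<noteq> j \<Longrightarrow> (i, j) \<notin> E \<Longrightarrow> W i j = 0"
    and W_diag: "\<And>i. i < n \<Longrightarrow> W i i > 1/2"
    and W_edge: "\<And>i j. (i, j) \<in> E \<Longrightarrow> W i j \<in> \<rat> \<and> 0 < W i j \<and> W i j < 1"
    and P: "prob_space M"
    and meas: "\<And>i t. i < n \<Longrightarrow> t \<ge> 1 \<Longrightarrow> x i t \<in> borel_measurable M"
    and indep: "\<And>i. i < n \<Longrightarrow> prob_space.indep_vars M (\<lambda>_. borel) (x i) {1..}"
    and ident: "\<And>i t. i < n \<Longrightarrow> t \<ge> 1 \<Longrightarrow> distr M borel (x i t) = distr M borel (x i 1)"
    and bounded: "\<And>i t \<omega>. i < n \<Longrightarrow> t \<ge> 1 \<Longrightarrow> \<omega> \<in> space M \<Longrightarrow> \<bar>x i t \<omega>\<bar> \<le> K"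
    and Delta_pos: "\<Delta> > 0"
    and not_boundary: "\<And>i. i < n \<Longrightarrow> (\<integral>\<omega>. x i 1 \<omega> \<partial>M) \<notin> boundary_set \<Delta>"
    and y_rec: "\<And>\<omega> t i. t \<ge> 1 \<Longrightarrow> i < n \<Longrightarrow>
       y \<omega> (t + 1) i =
         (\<Sum>j<n. W i j * quant q (y \<omega> t j)) + y \<omega> t i - quant q (y \<omega> t i)
         + (roundDelta \<Delta> (sample_mean (x i) (t + 1) \<omega>) - roundDelta \<Delta> (sample_mean (x i) t \<omega>))"
  shows "AE \<omega> in M. \<exists>S. finite S \<and> (\<forall>t\<ge>1. \<forall>i<n. y \<omega> t i \<in> S)"
proof -
  interpret prob_space M by (rule P)
  have "W i j \<in> \<rat>" if "i < n" "j < n" "i \<noteq> j" for i j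
    using W_edge W_zero that by (cases "(i, j) \<in> E") auto
  note W_rat = stochastic_matrix_Rats[OF W_stoch this]
  have bounded_AE: "AE \<omega> in M. \<bar>x i 1 \<omega>\<bar> \<le> K" if "i < n" for i
    using bounded[OF that] by (intro AE_I2) simp
  have roundDelta_settles: "AE \<omega> in M. \<forall>\<^sub>F t in sequentially.
      roundDelta \<Delta> (sample_mean (x i) t \<omega>) = roundDelta \<Delta> (expectation (x i 1))" if i: "i < n" for i
    by (rule AE_eventually_roundDelta_sample_mean[OF meas[OF i] indep[OF i] ident[OF i]
          bounded_AE[OF i] Delta_pos not_boundary[OF i]])
  have "AE \<omega> in M. \<forall>i\<in>{..<n}. \<forall>\<^sub>F t in sequentially.
      roundDelta \<Delta> (sample_mean (x i) t \<omega>) = roundDelta \<Delta> (expectation (x i 1))"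
    by (rule AE_finite_allI[OF finite_lessThan]) (rule roundDelta_settles, simp)
  then show ?thesis
  proof eventually_elim
    case (elim \<omega>)
    then have "\<forall>\<^sub>F t in sequentially. \<forall>i\<in>{..<n}.
        roundDelta \<Delta> (sample_mean (x i) t \<omega>) = roundDelta \<Delta> (expectation (x i 1))"
      by (rule eventually_ball_finite[rotated]) simp
    then obtain N where N: "\<And>t i. t \<ge> N \<Longrightarrow> i < n \<Longrightarrow>
        roundDelta \<Delta> (sample_mean (x i) t \<omega>) = roundDelta \<Delta> (expectation (x i 1))"
      unfolding eventually_sequentially by blast
    interpret quantized_consensus n W q "y \<omega>" "Suc N"
      by unfold_locales (use W_nonneg W_stoch W_rat y_rec N in auto)
    show ?case using finite_values by blast
  qed
qed

end
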